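(* Let $X$ be a real Gaussian random variable (normal with positive variance). Then $$\log\mathbb{E}X^2-\mathbb{E}\log X^2\le C_1,\qquad C_1=-\frac{1}{\sqrt{2\pi}}\int_{\mathbb{R}}\log(x^2)e^{-x^2/2}\,dx=1.270362845\ldots,$$ with equality if and only if $\mathbb{E}X=0$. *)

theory Defs
  imports "HOL-Probability.Probability"
begin

definition C1 :: real where
  "C1 = - (1 / sqrt (2 * pi)) * (\<integral>x. ln (x\<^sup>2) * exp (- x\<^sup>2 / 2) \<partial>lborel)"

end

theory Submission
  imports Defs
begin

text \<open>
  Scaling by \<open>\<sigma>\<close> reduces everything to \<open>Y \<sim> N(m, 1)\<close> with \<open>m = \<mu>/\<sigma>\<close>: the left-hand side
  becomes \<open>ln (1 + m\<^sup>2) - g m\<close> where \<open>g m = E ln Y\<^sup>2\<close>, and \<open>C1 = - g 0\<close>.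
  Writing \<open>ln |y|\<close> as \<open>\<integral> dz / z\<close> over \<open>[1, |y|]\<close> or \<open>[|y|, 1]\<close> and applying Tonelli gives
  \<open>g m - g 0 = 2 \<integral>\<^sub>0\<^sup>\<infinity> (P(|Y\<^sub>0| \<le> z) - P(|Y\<^sub>m| \<le> z)) dz / z\<close>. The difference of
  probabilities is \<open>\<integral>\<^sub>0\<^sup>m (\<phi>(z - t) - \<phi>(z + t)) dt\<close>, and a second Tonelli swap together with the
  Gaussian moment generating function evaluates \<open>\<integral>\<^sub>0\<^sup>\<infinity> (\<phi>(z - t) - \<phi>(z + t)) dz / z\<close> as
  \<open>D t = exp (- t\<^sup>2 / 2) \<integral>\<^sub>0\<^sup>t exp (s\<^sup>2 / 2) ds\<close>. Hence \<open>g m - g 0 = 2 \<integral>\<^sub>0\<^bsup>|m|\<^esup> D\<close>, and the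
  elementary bound \<open>D t > t / (1 + t\<^sup>2)\<close> for \<open>t > 0\<close> integrates to \<open>ln (1 + m\<^sup>2)\<close>.
\<close>

section \<open>A Dawson-type function\<close>

lemma integral_Icc_has_real_derivative_at:
  assumes "continuous_on {a..b} f" "a < t" "t < b"
  shows "((\<lambda>x. integral {a..x} f) has_real_derivative f t) (at t)"
proof -
  have "((\<lambda>x. integral {a..x} f) has_real_derivative f t) (at t within {a..b})"
    using assms by (intro integral_has_real_derivative) auto
  moreover have "at t within {a..b} = at t"
    using assms by (intro at_within_interior) (simp add: interior_atLeastAtMost_real)
  ultimately show ?thesis by simp
qed

text \<open>\<open>dawson t = \<surd>2 F(t / \<surd>2)\<close> for Dawson's integral \<open>F x = exp (- x\<^sup>2) \<integral>\<^sub>0\<^sup>x exp (u\<^sup>2) du\<close>.\<close>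

definition dawson :: "real \<Rightarrow> real" where
  "dawson t = exp (- t\<^sup>2 / 2) * integral {0..t} (\<lambda>s. exp (s\<^sup>2 / 2))"

lemma continuous_on_dawson: "continuous_on {0..b} dawson"
  unfolding dawson_def
  by (intro continuous_intros indefinite_integral_continuous_1 integrable_continuous_interval) auto

lemma dawson_nonneg: "0 \<le> t \<Longrightarrow> 0 \<le> dawson t"
  unfolding dawson_def
  by (intro mult_nonneg_nonneg Henstock_Kurzweil_Integration.integral_nonneg
        integrable_continuous_interval continuous_intros) auto

lemma div_one_plus_sq_less_dawson:
  assumes "0 < t"
  shows "t / (1 + t\<^sup>2) < dawson t"
proof -
  define F where "F x = integral {0..x} (\<lambda>s. exp (s\<^sup>2 / 2))" for x :: real
  define E where "E x = F x - x * exp (x\<^sup>2 / 2) / (1 + x\<^sup>2)" for x :: real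
  have "E 0 < E t"
  proof (rule DERIV_pos_imp_increasing_open[OF assms])
    fix x :: real assume x: "0 < x" "x < t"
    have "1 + x\<^sup>2 \<noteq> 0" by (simp add: add_nonneg_eq_0_iff)
    have "(F has_real_derivative exp (x\<^sup>2 / 2)) (at x)"
      unfolding F_def[abs_def] using x
      by (intro integral_Icc_has_real_derivative_at[where b = "x + 1"] continuous_intros) auto
    then have "(E has_real_derivative 2 * x\<^sup>2 * exp (x\<^sup>2 / 2) / (1 + x\<^sup>2)\<^sup>2) (at x)"
      unfolding E_def[abs_def]
      using \<open>1 + x\<^sup>2 \<noteq> 0\<close>
      by (auto intro!: derivative_eq_intros) (simp add: divide_simps; algebra)
    moreover have "0 < 2 * x\<^sup>2 * exp (x\<^sup>2 / 2) / (1 + x\<^sup>2)\<^sup>2"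
      using x by (simp add: add_nonneg_eq_0_iff)
    ultimately show "\<exists>y. (E has_real_derivative y) (at x) \<and> 0 < y" by blast
  next
    show "continuous_on {0..t} E"
      unfolding E_def F_def
      by (intro continuous_intros indefinite_integral_continuous_1 integrable_continuous_interval)
         (auto simp: add_nonneg_eq_0_iff)
  qed
  then have "t * exp (t\<^sup>2 / 2) / (1 + t\<^sup>2) < F t"
    by (simp add: E_def F_def)
  then have "exp (- t\<^sup>2 / 2) * (t * exp (t\<^sup>2 / 2) / (1 + t\<^sup>2)) < exp (- t\<^sup>2 / 2) * F t"
    by (intro mult_strict_left_mono) auto
  moreover have "exp (- t\<^sup>2 / 2) * (t * exp (t\<^sup>2 / 2) / (1 + t\<^sup>2)) = t / (1 + t\<^sup>2)"
    by (simp add: exp_minus field_simps)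
  ultimately show ?thesis
    unfolding dawson_def F_def by linarith
qed

lemma ln_one_plus_sq_less_integral_dawson:
  assumes "0 < m"
  shows "ln (1 + m\<^sup>2) < 2 * integral {0..m} dawson"
proof -
  define W where "W x = integral {0..x} dawson - ln (1 + x\<^sup>2) / 2" for x :: real
  have "W 0 < W m"
  proof (rule DERIV_pos_imp_increasing_open[OF assms])
    fix x :: real assume x: "0 < x" "x < m"
    have "((\<lambda>x. integral {0..x} dawson) has_real_derivative dawson x) (at x)"
      using x by (intro integral_Icc_has_real_derivative_at[where b = "x + 1"] continuous_on_dawson) auto
    then have "(W has_real_derivative dawson x - x / (1 + x\<^sup>2)) (at x)"
      unfolding W_def[abs_def]
      using \<open>0 < x\<close> by (auto intro!: derivative_eq_intros simp: add_pos_nonneg) (simp add: divide_simps; algebra)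
    moreover have "0 < dawson x - x / (1 + x\<^sup>2)"
      using div_one_plus_sq_less_dawson[OF x(1)] by simp
    ultimately show "\<exists>y. (W has_real_derivative y) (at x) \<and> 0 < y" by blast
  next
    show "continuous_on {0..m} W"
      unfolding W_def
      by (intro continuous_intros indefinite_integral_continuous_1 integrable_continuous_interval
            continuous_on_dawson) (auto simp: add_nonneg_eq_0_iff)
  qed
  then show ?thesis by (simp add: W_def)
qed

section \<open>Gaussian integrals producing the Dawson function\<close>

lemma nn_integral_even_function:
  fixes f :: "real \<Rightarrow> real"
  assumes [measurable]: "f \<in> borel_measurable borel" and even: "\<And>x. f (- x) = f x"
  shows "(\<integral>\<^sup>+x. f x \<partial>lborel) = 2 * (\<integral>\<^sup>+x. ennreal (f x) * indicator {0<..} x \<partial>lborel)"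
proof -
  have "(\<integral>\<^sup>+x. f x \<partial>lborel)
      = (\<integral>\<^sup>+x. ennreal (f x) * indicator {0<..} x + ennreal (f x) * indicator {..<0} x \<partial>lborel)"
    by (intro nn_integral_cong_AE eventually_mono[OF AE_lborel_singleton[of 0]])
       (auto simp: indicator_def)
  also have "\<dots> = (\<integral>\<^sup>+x. ennreal (f x) * indicator {0<..} x \<partial>lborel)
                  + (\<integral>\<^sup>+x. ennreal (f x) * indicator {..<0} x \<partial>lborel)"
    by (rule nn_integral_add) auto
  also have "(\<integral>\<^sup>+x. ennreal (f x) * indicator {..<0} x \<partial>lborel)
           = (\<integral>\<^sup>+x. ennreal (f x) * indicator {0<..} x \<partial>lborel)"
    using nn_integral_real_affine[of "\<lambda>x. ennreal (f x) * indicator {..<0} x" "-1" 0]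
    by (simp add: even indicator_def)
  finally show ?thesis by (simp add: mult_2)
qed

lemma std_normal_density_shift:
  "std_normal_density (z - t) = exp (- t\<^sup>2 / 2) * std_normal_density z * exp (t * z)"
  by (simp add: std_normal_density_def exp_add[symmetric] power2_eq_square algebra_simps)
     (simp add: field_simps)

lemma nn_integral_std_normal_mgf:
  "(\<integral>\<^sup>+z. std_normal_density z * exp (s * z) \<partial>lborel) = exp (s\<^sup>2 / 2)"
proof -
  have "std_normal_density z * exp (s * z) = exp (s\<^sup>2 / 2) * normal_density s 1 z" for z
    using std_normal_density_shift[of z s] by (simp add: normal_density_def exp_minus field_simps)
  then have "(\<integral>\<^sup>+z. std_normal_density z * exp (s * z) \<partial>lborel)
      = exp (s\<^sup>2 / 2) * (\<integral>\<^sup>+z. normal_density s 1 z \<partial>lborel)"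
    by (simp add: ennreal_mult nn_integral_cmult)
  also have "(\<integral>\<^sup>+z. normal_density s 1 z \<partial>lborel) = 1"
    by (subst nn_integral_eq_integral) auto
  finally show ?thesis by simp
qed

lemma nn_integral_exp_sq_half_symmetric_Icc:
  assumes "0 \<le> t"
  shows "(\<integral>\<^sup>+s. ennreal (exp (s\<^sup>2 / 2)) * indicator {-t..t} s \<partial>lborel)
       = 2 * ennreal (integral {0..t} (\<lambda>s. exp (s\<^sup>2 / 2)))"
proof -
  have "(\<integral>\<^sup>+s. ennreal (exp (s\<^sup>2 / 2)) * indicator {-t..t} s \<partial>lborel)
      = (\<integral>\<^sup>+s. exp (s\<^sup>2 / 2) * indicator {-t..t} s \<partial>lborel)"
    by (intro nn_integral_cong) (simp add: indicator_def)
  also have "\<dots> = 2 * (\<integral>\<^sup>+s. ennreal (exp (s\<^sup>2 / 2) * indicator {-t..t} s) * indicator {0<..} s \<partial>lborel)"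
    by (rule nn_integral_even_function) (auto simp: indicator_def)
  also have "(\<integral>\<^sup>+s. ennreal (exp (s\<^sup>2 / 2) * indicator {-t..t} s) * indicator {0<..} s \<partial>lborel)
      = (\<integral>\<^sup>+s. ennreal (exp (s\<^sup>2 / 2)) * indicator {0..t} s \<partial>lborel)"
    by (intro nn_integral_cong_AE eventually_mono[OF AE_lborel_singleton[of 0]])
       (auto simp: indicator_def)
  also have "\<dots> = integral {0..t} (\<lambda>s. exp (s\<^sup>2 / 2))"
    by (intro nn_integral_has_integral_lebesgue' integrable_integral
          integrable_continuous_interval continuous_intros) auto
  finally show ?thesis .
qed

lemma std_normal_shift_diff_div_eq_nn_integral:
  assumes "z \<noteq> 0" "0 \<le> t"
  shows "ennreal ((std_normal_density (z - t) - std_normal_density (z + t)) / z)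
       = exp (- t\<^sup>2 / 2) * (\<integral>\<^sup>+s. ennreal (std_normal_density z * exp (s * z)) * indicator {-t..t} s \<partial>lborel)"
proof -
  have "(\<integral>\<^sup>+s. ennreal (exp (s * z)) * indicator {-t..t} s \<partial>lborel) = exp (t * z) / z - exp (- t * z) / z"
    using assms
    by (intro nn_integral_FTC_Icc[where F = "\<lambda>s. exp (s * z) / z"]) (auto intro!: derivative_eq_intros)
  moreover have "(std_normal_density (z - t) - std_normal_density (z + t)) / z
      = exp (- t\<^sup>2 / 2) * std_normal_density z * (exp (t * z) / z - exp (- t * z) / z)"
  proof -
    have "std_normal_density (z + t) = exp (- t\<^sup>2 / 2) * std_normal_density z * exp (- t * z)"
      using std_normal_density_shift[of z "- t"] by simp
    then show ?thesis
      using std_normal_density_shift[of z t] assms(1) by (simp add: field_simps)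
  qed
  ultimately show ?thesis
    by (simp add: ennreal_mult' mult.assoc nn_integral_cmult)
qed

lemma nn_integral_std_normal_shift_diff_div:
  assumes "0 \<le> t"
  shows "(\<integral>\<^sup>+z. (std_normal_density (z - t) - std_normal_density (z + t)) / z \<partial>lborel) = 2 * ennreal (dawson t)"
proof -
  let ?g = "\<lambda>z s. ennreal (std_normal_density z * exp (s * z)) * indicator {-t..t} s"
  have "(\<integral>\<^sup>+z. (std_normal_density (z - t) - std_normal_density (z + t)) / z \<partial>lborel)
      = (\<integral>\<^sup>+z. exp (- t\<^sup>2 / 2) * (\<integral>\<^sup>+s. ?g z s \<partial>lborel) \<partial>lborel)"
    using assms
    by (intro nn_integral_cong_AE eventually_mono[OF AE_lborel_singleton[of 0]]
          std_normal_shift_diff_div_eq_nn_integral)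
  also have "\<dots> = exp (- t\<^sup>2 / 2) * (\<integral>\<^sup>+z. \<integral>\<^sup>+s. ?g z s \<partial>lborel \<partial>lborel)"
    by (rule nn_integral_cmult) measurable
  also have "(\<integral>\<^sup>+z. \<integral>\<^sup>+s. ?g z s \<partial>lborel \<partial>lborel) = (\<integral>\<^sup>+s. \<integral>\<^sup>+z. ?g z s \<partial>lborel \<partial>lborel)"
    by (rule lborel_pair.Fubini') measurable
  also have "\<dots> = (\<integral>\<^sup>+s. ennreal (exp (s\<^sup>2 / 2)) * indicator {-t..t} s \<partial>lborel)"
    by (intro nn_integral_cong) (simp add: nn_integral_multc nn_integral_std_normal_mgf)
  also have "exp (- t\<^sup>2 / 2) * \<dots> = 2 * ennreal (dawson t)"
    by (simp only: nn_integral_exp_sq_half_symmetric_Icc[OF assms])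
       (simp add: dawson_def ennreal_mult' mult_ac)
  finally show ?thesis .
qed

lemma nn_integral_std_normal_shift_diff_div_pos:
  assumes "0 \<le> t"
  shows "(\<integral>\<^sup>+z. ennreal ((std_normal_density (z - t) - std_normal_density (z + t)) / z) * indicator {0<..} z \<partial>lborel)
       = dawson t"
proof -
  define k where "k z = (std_normal_density (z - t) - std_normal_density (z + t)) / z" for z
  have "k (- z) = k z" for z
  proof -
    have "std_normal_density (- z - t) = std_normal_density (z + t)"
      "std_normal_density (- z + t) = std_normal_density (z - t)"
      by (simp_all add: std_normal_density_def power2_eq_square algebra_simps)
    then show ?thesis
      unfolding k_def by (cases "z = 0") (auto simp: field_simps)
  qed
  moreover have "k \<in> borel_measurable borel"
    unfolding k_def by measurable
  ultimately have "2 * (\<integral>\<^sup>+z. ennreal (k z) * indicator {0<..} z \<partial>lborel) = 2 * ennreal (dawson t)"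
    using nn_integral_even_function[of k] nn_integral_std_normal_shift_diff_div[OF assms]
    by (simp add: k_def)
  then show ?thesis
    unfolding k_def by (simp add: ennreal_mult_cancel_left)
qed

section \<open>The folded normal distribution\<close>

definition folded_normal_cdf :: "real \<Rightarrow> real \<Rightarrow> real" where
  "folded_normal_cdf m z = (\<integral>y. normal_density m 1 y * indicator {-z..z} y \<partial>lborel)"

definition folded_normal_tail :: "real \<Rightarrow> real \<Rightarrow> real" where
  "folded_normal_tail m z = (\<integral>y. normal_density m 1 y * indicator {y. z \<le> \<bar>y\<bar>} y \<partial>lborel)"

lemma borel_measurable_folded_normal_cdf [measurable]:
  "folded_normal_cdf m \<in> borel_measurable borel"
proof -
  have "folded_normal_cdf m = (\<lambda>z. \<integral>y. normal_density m 1 y * (if - z \<le> y \<and> y \<le> z then 1 else 0) \<partial>lborel)"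
    unfolding folded_normal_cdf_def indicator_def of_bool_def by simp
  also have "\<dots> \<in> borel_measurable borel" by measurable
  finally show ?thesis .
qed

lemma borel_measurable_folded_normal_tail [measurable]:
  "folded_normal_tail m \<in> borel_measurable borel"
proof -
  have "folded_normal_tail m = (\<lambda>z. \<integral>y. normal_density m 1 y * (if z \<le> \<bar>y\<bar> then 1 else 0) \<partial>lborel)"
    unfolding folded_normal_tail_def indicator_def of_bool_def by simp
  also have "\<dots> \<in> borel_measurable borel" by measurable
  finally show ?thesis .
qed

lemma folded_normal_cdf_nonneg: "0 \<le> folded_normal_cdf m z"
  unfolding folded_normal_cdf_def by (rule Bochner_Integration.integral_nonneg) auto

lemma folded_normal_tail_nonneg: "0 \<le> folded_normal_tail m z"
  unfolding folded_normal_tail_def by (rule Bochner_Integration.integral_nonneg) auto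

lemma folded_normal_cdf_plus_tail:
  assumes "0 < z"
  shows "folded_normal_cdf m z + folded_normal_tail m z = 1"
proof -
  have "folded_normal_cdf m z + folded_normal_tail m z
      = (\<integral>y. normal_density m 1 y * indicator {-z..z} y
              + normal_density m 1 y * indicator {y. z \<le> \<bar>y\<bar>} y \<partial>lborel)"
    unfolding folded_normal_cdf_def folded_normal_tail_def
    by (subst Bochner_Integration.integral_add) (auto intro!: integrable_real_mult_indicator)
  also have "\<dots> = (\<integral>y. normal_density m 1 y \<partial>lborel)"
  proof (rule integral_cong_AE)
    have "AE y in lborel. y \<noteq> z \<and> y \<noteq> -z"
      using AE_lborel_singleton[of z] AE_lborel_singleton[of "-z"] by eventually_elim auto
    then show "AE y in lborel. normal_density m 1 y * indicator {-z..z} y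
        + normal_density m 1 y * indicator {y. z \<le> \<bar>y\<bar>} y = normal_density m 1 y"
      by eventually_elim (auto simp: indicator_def)
  qed auto
  finally show ?thesis by simp
qed

lemma normal_density_unit_variance_le: "normal_density m 1 y \<le> 1 / 2"
proof -
  have "2 \<le> sqrt (2 * pi)"
    using pi_gt3 by (intro real_le_rsqrt) auto
  then have "1 / sqrt (2 * pi) * exp (- (y - m)\<^sup>2 / 2) \<le> 1 / 2 * 1"
    by (intro mult_mono divide_left_mono) auto
  then show ?thesis by (simp add: normal_density_def)
qed

lemma folded_normal_cdf_le:
  assumes "0 \<le> z"
  shows "folded_normal_cdf m z \<le> z"
proof -
  have "folded_normal_cdf m z \<le> (\<integral>y. 1 / 2 * indicator {-z..z} y \<partial>lborel)"
    unfolding folded_normal_cdf_def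
    by (intro Bochner_Integration.integral_mono integrable_real_mult_indicator integrable_mult_right
          integrable_real_indicator)
       (use assms normal_density_unit_variance_le[of m] in \<open>auto simp: indicator_def emeasure_lborel_Icc\<close>)
  also have "\<dots> = z" using assms by simp
  finally show ?thesis .
qed

lemma folded_normal_cdf_eq_std_normal:
  "folded_normal_cdf m z = (\<integral>u. std_normal_density u * indicator {-z-m..z-m} u \<partial>lborel)"
proof -
  have "folded_normal_cdf m z
      = \<bar>1\<bar> *\<^sub>R (\<integral>u. normal_density m 1 (m + 1 * u) * indicator {-z..z} (m + 1 * u) \<partial>lborel)"
    unfolding folded_normal_cdf_def by (rule lborel_integral_real_affine) simp
  also have "\<dots> = (\<integral>u. std_normal_density u * indicator {-z-m..z-m} u \<partial>lborel)"
    by (auto simp: normal_density_def indicator_def intro!: Bochner_Integration.integral_cong)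
  finally show ?thesis .
qed

lemma integrable_std_normal_affine_indicator:
  "A \<in> sets borel \<Longrightarrow> c \<noteq> 0 \<Longrightarrow> integrable lborel (\<lambda>t. std_normal_density (z + c * t) * indicator A t)"
  by (intro integrable_real_mult_indicator) (auto simp: lborel_integrable_real_affine_iff)

lemma integral_std_normal_Icc_reflect:
  "(\<integral>u. std_normal_density u * indicator {a - m..a} u \<partial>lborel)
   = (\<integral>t. std_normal_density (a - t) * indicator {0..m} t \<partial>lborel)"
  using lborel_integral_real_affine[where f = "\<lambda>u. std_normal_density u * indicator {a - m..a} u"
      and c = "-1" and t = a]
  by (simp add: indicator_def conj_commute)

lemma folded_normal_cdf_diff:
  assumes "0 < z" "0 \<le> m"
  shows "folded_normal_cdf 0 z - folded_normal_cdf m z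
       = (\<integral>t. (std_normal_density (z - t) - std_normal_density (z + t)) * indicator {0..m} t \<partial>lborel)"
proof -
  let ?P = "\<lambda>S. \<integral>u. std_normal_density u * indicator S u \<partial>lborel"
  have int: "integrable lborel (\<lambda>u. std_normal_density u * indicator S u)" if "S \<in> sets borel" for S
    using integrable_std_normal_affine_indicator[OF that, where z = 0 and c = 1] by simp
  have "?P {-z..z} + ?P {-z-m..-z}
      = (\<integral>u. std_normal_density u * indicator {-z..z} u + std_normal_density u * indicator {-z-m..-z} u \<partial>lborel)"
    by (subst Bochner_Integration.integral_add) (auto intro!: int)
  also have "\<dots> = (\<integral>u. std_normal_density u * indicator {-z-m..z-m} u + std_normal_density u * indicator {z-m..z} u \<partial>lborel)"
  proof (rule integral_cong_AE)
    have "AE u in lborel. u \<noteq> -z \<and> u \<noteq> z - m"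
      using AE_lborel_singleton[of "-z"] AE_lborel_singleton[of "z - m"] by eventually_elim auto
    then show "AE u in lborel. std_normal_density u * indicator {-z..z} u + std_normal_density u * indicator {-z-m..-z} u
        = std_normal_density u * indicator {-z-m..z-m} u + std_normal_density u * indicator {z-m..z} u"
      by eventually_elim (use assms in \<open>auto simp: indicator_def\<close>)
  qed auto
  also have "\<dots> = ?P {-z-m..z-m} + ?P {z-m..z}"
    by (subst Bochner_Integration.integral_add) (auto intro!: int)
  finally have "?P {-z..z} - ?P {-z-m..z-m} = ?P {z-m..z} - ?P {-z-m..-z}"
    by linarith
  moreover have "std_normal_density (- z - t) = std_normal_density (z + t)" for t
    by (simp add: std_normal_density_def power2_eq_square algebra_simps)
  ultimately have "folded_normal_cdf 0 z - folded_normal_cdf m z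
      = (\<integral>t. std_normal_density (z - t) * indicator {0..m} t \<partial>lborel)
        - (\<integral>t. std_normal_density (z + t) * indicator {0..m} t \<partial>lborel)"
    using integral_std_normal_Icc_reflect[of z m] integral_std_normal_Icc_reflect[of "-z" m]
    by (simp add: folded_normal_cdf_eq_std_normal)
  also have "\<dots> = (\<integral>t. (std_normal_density (z - t) - std_normal_density (z + t)) * indicator {0..m} t \<partial>lborel)"
    using integrable_std_normal_affine_indicator[of "{0..m}" "-1" z]
      integrable_std_normal_affine_indicator[of "{0..m}" 1 z]
    by (subst Bochner_Integration.integral_diff[symmetric]) (auto simp: algebra_simps)
  finally show ?thesis .
qed

lemma std_normal_density_shift_le:
  assumes "0 \<le> z" "0 \<le> t"
  shows "std_normal_density (z + t) \<le> std_normal_density (z - t)"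
proof -
  have "(z - t)\<^sup>2 \<le> (z + t)\<^sup>2"
    using assms by (simp add: power2_eq_square algebra_simps)
  then show ?thesis
    unfolding std_normal_density_def by (intro mult_left_mono) auto
qed

lemma folded_normal_cdf_le_zero_mean:
  assumes "0 < z" "0 \<le> m"
  shows "folded_normal_cdf m z \<le> folded_normal_cdf 0 z"
proof -
  have "0 \<le> (\<integral>t. (std_normal_density (z - t) - std_normal_density (z + t)) * indicator {0..m} t \<partial>lborel)"
    using assms std_normal_density_shift_le[of z]
    by (intro Bochner_Integration.integral_nonneg) (simp add: indicator_def)
  then show ?thesis
    using folded_normal_cdf_diff[OF assms] by simp
qed

lemma nn_integral_folded_normal_cdf_diff:
  assumes "0 < z" "0 \<le> m"
  shows "ennreal (folded_normal_cdf 0 z - folded_normal_cdf m z)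
       = (\<integral>\<^sup>+t. ennreal (std_normal_density (z - t) - std_normal_density (z + t)) * indicator {0..m} t \<partial>lborel)"
proof -
  have "integrable lborel (\<lambda>t. (std_normal_density (z - t) - std_normal_density (z + t)) * indicator {0..m} t)"
    using integrable_std_normal_affine_indicator[of "{0..m}" "-1" z]
      integrable_std_normal_affine_indicator[of "{0..m}" 1 z]
    by (auto dest: Bochner_Integration.integrable_diff simp: algebra_simps)
  then have "ennreal (folded_normal_cdf 0 z - folded_normal_cdf m z)
      = (\<integral>\<^sup>+t. ennreal ((std_normal_density (z - t) - std_normal_density (z + t)) * indicator {0..m} t) \<partial>lborel)"
    unfolding folded_normal_cdf_diff[OF assms] using assms std_normal_density_shift_le[of z]
    by (intro nn_integral_eq_integral[symmetric] AE_I2) (auto simp: indicator_def)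
  also have "\<dots> = (\<integral>\<^sup>+t. ennreal (std_normal_density (z - t) - std_normal_density (z + t)) * indicator {0..m} t \<partial>lborel)"
    by (intro nn_integral_cong) (simp add: indicator_def)
  finally show ?thesis .
qed

lemma nn_integral_folded_normal_cdf_diff_div:
  assumes "0 \<le> m"
  shows "(\<integral>\<^sup>+z. ennreal (indicator {0<..} z / z * (folded_normal_cdf 0 z - folded_normal_cdf m z)) \<partial>lborel)
       = integral {0..m} dawson"
proof -
  let ?R = "\<lambda>z. folded_normal_cdf 0 z - folded_normal_cdf m z"
  let ?\<rho> = "\<lambda>z t. ennreal (std_normal_density (z - t) - std_normal_density (z + t))"
  have "(\<integral>\<^sup>+z. ennreal (indicator {0<..} z / z * ?R z) \<partial>lborel)
      = (\<integral>\<^sup>+z. \<integral>\<^sup>+t. ennreal (indicator {0<..} z / z) * (?\<rho> z t * indicator {0..m} t) \<partial>lborel \<partial>lborel)"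
  proof (intro nn_integral_cong)
    fix z :: real
    show "ennreal (indicator {0<..} z / z * ?R z)
        = (\<integral>\<^sup>+t. ennreal (indicator {0<..} z / z) * (?\<rho> z t * indicator {0..m} t) \<partial>lborel)"
    proof (cases "0 < z")
      case True
      have "ennreal (indicator {0<..} z / z * ?R z) = ennreal (indicator {0<..} z / z) * ennreal (?R z)"
        using True by (subst ennreal_mult'[symmetric]) simp_all
      also have "\<dots> = (\<integral>\<^sup>+t. ennreal (indicator {0<..} z / z) * (?\<rho> z t * indicator {0..m} t) \<partial>lborel)"
        using True assms by (simp add: nn_integral_folded_normal_cdf_diff nn_integral_cmult)
      finally show ?thesis .
    qed simp
  qed
  also have "\<dots> = (\<integral>\<^sup>+t. \<integral>\<^sup>+z. ennreal (indicator {0<..} z / z) * (?\<rho> z t * indicator {0..m} t) \<partial>lborel \<partial>lborel)"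
    by (rule lborel_pair.Fubini'[symmetric]) measurable
  also have "\<dots> = (\<integral>\<^sup>+t. ennreal (dawson t) * indicator {0..m} t \<partial>lborel)"
  proof (intro nn_integral_cong)
    fix t :: real
    show "(\<integral>\<^sup>+z. ennreal (indicator {0<..} z / z) * (?\<rho> z t * indicator {0..m} t) \<partial>lborel)
        = ennreal (dawson t) * indicator {0..m} t"
    proof (cases "t \<in> {0..m}")
      case True
      have "(\<integral>\<^sup>+z. ennreal (indicator {0<..} z / z) * (?\<rho> z t * indicator {0..m} t) \<partial>lborel)
          = (\<integral>\<^sup>+z. ennreal ((std_normal_density (z - t) - std_normal_density (z + t)) / z) * indicator {0<..} z \<partial>lborel)"
        using True by (intro nn_integral_cong) (simp add: indicator_def ennreal_mult'[symmetric])
      then show ?thesis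
        using True by (simp add: nn_integral_std_normal_shift_diff_div_pos)
    qed simp
  qed
  also have "\<dots> = integral {0..m} dawson"
    by (intro nn_integral_has_integral_lebesgue' integrable_integral integrable_continuous_interval
          continuous_on_dawson dawson_nonneg) auto
  finally show ?thesis .
qed

lemma has_bochner_integral_folded_normal_cdf_diff_div:
  assumes "0 \<le> m"
  shows "has_bochner_integral lborel
           (\<lambda>z. indicator {0<..} z / z * (folded_normal_cdf 0 z - folded_normal_cdf m z))
           (integral {0..m} dawson)"
proof (rule has_bochner_integral_nn_integral)
  show "0 \<le> integral {0..m} dawson"
    by (intro Henstock_Kurzweil_Integration.integral_nonneg integrable_continuous_interval
          continuous_on_dawson dawson_nonneg) auto
  show "AE z in lborel. 0 \<le> indicator {0<..} z / z * (folded_normal_cdf 0 z - folded_normal_cdf m z)"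
    using folded_normal_cdf_le_zero_mean[of _ m] assms by (auto simp: indicator_def)
qed (use assms nn_integral_folded_normal_cdf_diff_div in auto)

section \<open>The logarithmic moment of a Gaussian\<close>

lemma ln_pos_part_eq_nn_integral:
  "ennreal (max 0 (ln \<bar>y\<bar>)) = (\<integral>\<^sup>+z. ennreal (1 / z) * indicator {1..\<bar>y\<bar>} z \<partial>lborel)"
proof (cases "1 \<le> \<bar>y\<bar>")
  case True
  then have "(\<integral>\<^sup>+z. ennreal (1 / z) * indicator {1..\<bar>y\<bar>} z \<partial>lborel) = ennreal (ln \<bar>y\<bar> - ln 1)"
    by (intro nn_integral_FTC_Icc) (auto intro!: derivative_eq_intros)
  then show ?thesis using True by simp
next
  case False
  then have "ln \<bar>y\<bar> \<le> 0" by (cases "y = 0") auto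
  then show ?thesis using False by simp
qed

lemma ln_neg_part_eq_nn_integral:
  assumes "y \<noteq> 0"
  shows "ennreal (max 0 (- ln \<bar>y\<bar>)) = (\<integral>\<^sup>+z. ennreal (1 / z) * indicator {\<bar>y\<bar>..1} z \<partial>lborel)"
proof (cases "\<bar>y\<bar> \<le> 1")
  case True
  then have "(\<integral>\<^sup>+z. ennreal (1 / z) * indicator {\<bar>y\<bar>..1} z \<partial>lborel) = ennreal (ln 1 - ln \<bar>y\<bar>)"
    using assms by (intro nn_integral_FTC_Icc) (auto intro!: derivative_eq_intros)
  then show ?thesis using True assms by simp
next
  case False
  then show ?thesis by simp
qed

lemma nn_integral_normal_ln_pos_part:
  "(\<integral>\<^sup>+y. ennreal (normal_density m 1 y * max 0 (ln \<bar>y\<bar>)) \<partial>lborel)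
   = (\<integral>\<^sup>+z. ennreal (indicator {1..} z / z * folded_normal_tail m z) \<partial>lborel)"
proof -
  let ?f = "\<lambda>y z. ennreal (if 1 \<le> z \<and> z \<le> \<bar>y\<bar> then normal_density m 1 y / z else 0)"
  have "(\<integral>\<^sup>+y. ennreal (normal_density m 1 y * max 0 (ln \<bar>y\<bar>)) \<partial>lborel)
      = (\<integral>\<^sup>+y. \<integral>\<^sup>+z. ?f y z \<partial>lborel \<partial>lborel)"
  proof (intro nn_integral_cong)
    fix y :: real
    have "ennreal (normal_density m 1 y * max 0 (ln \<bar>y\<bar>))
        = ennreal (normal_density m 1 y) * (\<integral>\<^sup>+z. ennreal (1 / z) * indicator {1..\<bar>y\<bar>} z \<partial>lborel)"
      by (simp add: ennreal_mult flip: ln_pos_part_eq_nn_integral)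
    also have "\<dots> = (\<integral>\<^sup>+z. ?f y z \<partial>lborel)"
      by (subst nn_integral_cmult[symmetric])
         (auto intro!: nn_integral_cong simp: indicator_def ennreal_mult[symmetric])
    finally show "ennreal (normal_density m 1 y * max 0 (ln \<bar>y\<bar>)) = (\<integral>\<^sup>+z. ?f y z \<partial>lborel)" .
  qed
  also have "\<dots> = (\<integral>\<^sup>+z. \<integral>\<^sup>+y. ?f y z \<partial>lborel \<partial>lborel)"
    by (rule lborel_pair.Fubini') measurable
  also have "\<dots> = (\<integral>\<^sup>+z. ennreal (indicator {1..} z / z * folded_normal_tail m z) \<partial>lborel)"
  proof (intro nn_integral_cong)
    fix z :: real
    have "(\<integral>\<^sup>+y. ?f y z \<partial>lborel)
        = ennreal (indicator {1..} z / z) * (\<integral>\<^sup>+y. ennreal (normal_density m 1 y * indicator {y. z \<le> \<bar>y\<bar>} y) \<partial>lborel)"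
      by (subst nn_integral_cmult[symmetric])
         (auto intro!: nn_integral_cong simp: indicator_def ennreal_mult[symmetric])
    also have "(\<integral>\<^sup>+y. ennreal (normal_density m 1 y * indicator {y. z \<le> \<bar>y\<bar>} y) \<partial>lborel)
             = folded_normal_tail m z"
      unfolding folded_normal_tail_def
      by (rule nn_integral_eq_integral) (auto intro!: integrable_real_mult_indicator)
    finally show "(\<integral>\<^sup>+y. ?f y z \<partial>lborel) = ennreal (indicator {1..} z / z * folded_normal_tail m z)"
      by (cases "1 \<le> z") (auto simp: indicator_def ennreal_mult'[symmetric])
  qed
  finally show ?thesis .
qed

lemma nn_integral_normal_ln_neg_part:
  "(\<integral>\<^sup>+y. ennreal (normal_density m 1 y * max 0 (- ln \<bar>y\<bar>)) \<partial>lborel)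
   = (\<integral>\<^sup>+z. ennreal (indicator {0<..<1} z / z * folded_normal_cdf m z) \<partial>lborel)"
proof -
  let ?f = "\<lambda>y z. ennreal (if \<bar>y\<bar> \<le> z \<and> z \<le> 1 then normal_density m 1 y / z else 0)"
  have "(\<integral>\<^sup>+y. ennreal (normal_density m 1 y * max 0 (- ln \<bar>y\<bar>)) \<partial>lborel)
      = (\<integral>\<^sup>+y. \<integral>\<^sup>+z. ?f y z \<partial>lborel \<partial>lborel)"
  proof (intro nn_integral_cong_AE eventually_mono[OF AE_lborel_singleton[of 0]])
    fix y :: real assume "y \<noteq> 0"
    then have "ennreal (normal_density m 1 y * max 0 (- ln \<bar>y\<bar>))
        = ennreal (normal_density m 1 y) * (\<integral>\<^sup>+z. ennreal (1 / z) * indicator {\<bar>y\<bar>..1} z \<partial>lborel)"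
      by (simp add: ennreal_mult flip: ln_neg_part_eq_nn_integral)
    also have "\<dots> = (\<integral>\<^sup>+z. ?f y z \<partial>lborel)"
      by (subst nn_integral_cmult[symmetric])
         (auto intro!: nn_integral_cong simp: indicator_def ennreal_mult[symmetric])
    finally show "ennreal (normal_density m 1 y * max 0 (- ln \<bar>y\<bar>)) = (\<integral>\<^sup>+z. ?f y z \<partial>lborel)" .
  qed
  also have "\<dots> = (\<integral>\<^sup>+z. \<integral>\<^sup>+y. ?f y z \<partial>lborel \<partial>lborel)"
    by (rule lborel_pair.Fubini') measurable
  also have "\<dots> = (\<integral>\<^sup>+z. ennreal (indicator {0<..<1} z / z * folded_normal_cdf m z) \<partial>lborel)"
  proof (intro nn_integral_cong_AE eventually_mono[OF AE_lborel_singleton[of 1]])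
    fix z :: real assume "z \<noteq> 1"
    have "(\<integral>\<^sup>+y. ?f y z \<partial>lborel)
        = (\<integral>\<^sup>+y. ennreal (indicator {0<..1} z / z) * ennreal (normal_density m 1 y * indicator {-z..z} y) \<partial>lborel)"
      by (intro nn_integral_cong) (auto simp: indicator_def ennreal_mult[symmetric])
    also have "\<dots> = ennreal (indicator {0<..1} z / z) * (\<integral>\<^sup>+y. ennreal (normal_density m 1 y * indicator {-z..z} y) \<partial>lborel)"
      by (rule nn_integral_cmult) measurable
    also have "(\<integral>\<^sup>+y. ennreal (normal_density m 1 y * indicator {-z..z} y) \<partial>lborel) = folded_normal_cdf m z"
      unfolding folded_normal_cdf_def
      by (rule nn_integral_eq_integral) (auto intro!: integrable_real_mult_indicator)
    finally show "(\<integral>\<^sup>+y. ?f y z \<partial>lborel) = ennreal (indicator {0<..<1} z / z * folded_normal_cdf m z)"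
      using \<open>z \<noteq> 1\<close> by (cases "0 < z \<and> z \<le> 1") (auto simp: indicator_def ennreal_mult'[symmetric])
  qed
  finally show ?thesis .
qed

lemma integrable_normal_ln_pos_part:
  "integrable lborel (\<lambda>y. normal_density m 1 y * max 0 (ln \<bar>y\<bar>))"
proof (rule Bochner_Integration.integrable_bound)
  show "integrable lborel (\<lambda>y. normal_density m 1 y * \<bar>y - m\<bar> ^ 1 + \<bar>m\<bar> * normal_density m 1 y)"
    by (intro Bochner_Integration.integrable_add integrable_normal_moment_abs integrable_mult_right
          integrable_normal_density) auto
  have "normal_density m 1 y * max 0 (ln \<bar>y\<bar>) \<le> normal_density m 1 y * (\<bar>y - m\<bar> + \<bar>m\<bar>)" for y :: real
  proof (intro mult_left_mono)
    have "max 0 (ln \<bar>y\<bar>) \<le> \<bar>y\<bar>"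
      using ln_le_minus_one[of "\<bar>y\<bar>"] by (cases "y = 0") auto
    then show "max 0 (ln \<bar>y\<bar>) \<le> \<bar>y - m\<bar> + \<bar>m\<bar>" by simp
  qed simp
  then show "AE y in lborel. norm (normal_density m 1 y * max 0 (ln \<bar>y\<bar>))
      \<le> norm (normal_density m 1 y * \<bar>y - m\<bar> ^ 1 + \<bar>m\<bar> * normal_density m 1 y)"
    by (intro AE_I2) (simp add: algebra_simps)
qed measurable

lemma nn_integral_normal_ln_neg_part_le:
  "(\<integral>\<^sup>+y. ennreal (normal_density m 1 y * max 0 (- ln \<bar>y\<bar>)) \<partial>lborel) \<le> 1"
proof -
  have "(\<integral>\<^sup>+z. ennreal (indicator {0<..<1} z / z * folded_normal_cdf m z) \<partial>lborel)
      \<le> (\<integral>\<^sup>+z. indicator {0..1::real} z \<partial>lborel)"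
  proof (intro nn_integral_mono)
    fix z :: real
    show "ennreal (indicator {0<..<1} z / z * folded_normal_cdf m z) \<le> indicator {0..1} z"
      using folded_normal_cdf_le[of z m] by (auto simp: indicator_def divide_le_eq)
  qed
  then show ?thesis
    by (simp add: nn_integral_normal_ln_neg_part)
qed

lemma integrable_normal_ln_neg_part:
  "integrable lborel (\<lambda>y. normal_density m 1 y * max 0 (- ln \<bar>y\<bar>))"
  using nn_integral_normal_ln_neg_part_le[of m]
  by (intro integrableI_nonneg) (auto intro: le_less_trans[OF _ ennreal_one_less_top])

definition normal_ln_sq_mean :: "real \<Rightarrow> real" where
  "normal_ln_sq_mean m = (\<integral>y. ln (y\<^sup>2) * normal_density m 1 y \<partial>lborel)"

lemma ln_sq_eq_pos_neg_parts:
  fixes y :: real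
  shows "ln (y\<^sup>2) = 2 * max 0 (ln \<bar>y\<bar>) - 2 * max 0 (- ln \<bar>y\<bar>)"
proof (cases "y = 0")
  case False
  then have "ln (y\<^sup>2) = 2 * ln \<bar>y\<bar>"
    using ln_realpow[of "\<bar>y\<bar>" 2] by simp
  then show ?thesis by simp
qed simp

lemma integrable_ln_sq_mult_normal_density:
  "integrable lborel (\<lambda>y. ln (y\<^sup>2) * normal_density m 1 y)"
  unfolding ln_sq_eq_pos_neg_parts
  using integrable_normal_ln_pos_part[of m] integrable_normal_ln_neg_part[of m]
  by (auto simp: algebra_simps)

lemma has_bochner_integral_normal_ln_sq_mean:
  "has_bochner_integral lborel
     (\<lambda>z. indicator {1..} z / z * folded_normal_tail m z - indicator {0<..<1} z / z * folded_normal_cdf m z)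
     (normal_ln_sq_mean m / 2)"
proof -
  let ?pos = "\<integral>y. normal_density m 1 y * max 0 (ln \<bar>y\<bar>) \<partial>lborel"
  let ?neg = "\<integral>y. normal_density m 1 y * max 0 (- ln \<bar>y\<bar>) \<partial>lborel"
  have "(\<integral>\<^sup>+z. ennreal (indicator {1..} z / z * folded_normal_tail m z) \<partial>lborel) = ennreal ?pos"
    unfolding nn_integral_normal_ln_pos_part[symmetric]
    using integrable_normal_ln_pos_part[of m] by (simp add: nn_integral_eq_integral)
  then have pos: "has_bochner_integral lborel (\<lambda>z. indicator {1..} z / z * folded_normal_tail m z) ?pos"
    using folded_normal_tail_nonneg[of m]
    by (intro has_bochner_integral_nn_integral Bochner_Integration.integral_nonneg)
       (auto simp: indicator_def)
  have "(\<integral>\<^sup>+z. ennreal (indicator {0<..<1} z / z * folded_normal_cdf m z) \<partial>lborel) = ennreal ?neg"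
    unfolding nn_integral_normal_ln_neg_part[symmetric]
    using integrable_normal_ln_neg_part[of m] by (simp add: nn_integral_eq_integral)
  then have neg: "has_bochner_integral lborel (\<lambda>z. indicator {0<..<1} z / z * folded_normal_cdf m z) ?neg"
    using folded_normal_cdf_nonneg[of m]
    by (intro has_bochner_integral_nn_integral Bochner_Integration.integral_nonneg)
       (auto simp: indicator_def)
  have "normal_ln_sq_mean m = (\<integral>y. 2 * (normal_density m 1 y * max 0 (ln \<bar>y\<bar>))
                            - 2 * (normal_density m 1 y * max 0 (- ln \<bar>y\<bar>)) \<partial>lborel)"
    unfolding normal_ln_sq_mean_def ln_sq_eq_pos_neg_parts by (simp add: algebra_simps)
  also have "\<dots> = 2 * ?pos - 2 * ?neg"
    using integrable_normal_ln_pos_part integrable_normal_ln_neg_part by simp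
  finally have half: "normal_ln_sq_mean m / 2 = ?pos - ?neg" by simp
  show ?thesis
    unfolding half by (rule has_bochner_integral_diff[OF pos neg])
qed

lemma normal_ln_sq_mean_diff:
  assumes "0 \<le> m"
  shows "normal_ln_sq_mean m - normal_ln_sq_mean 0 = 2 * integral {0..m} dawson"
proof -
  let ?L = "\<lambda>m z. indicator {1..} z / z * folded_normal_tail m z - indicator {0<..<1} z / z * folded_normal_cdf m z"
  have "?L m z - ?L 0 z = indicator {0<..} z / z * (folded_normal_cdf 0 z - folded_normal_cdf m z)" for z
  proof (cases "0 < z")
    case True
    then have "folded_normal_tail k z = 1 - folded_normal_cdf k z" for k
      using folded_normal_cdf_plus_tail[of z k] by simp
    then show ?thesis
      using True by (simp add: indicator_def diff_divide_distrib)
  qed (simp add: indicator_def)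
  then have "has_bochner_integral lborel (\<lambda>z. ?L m z - ?L 0 z) (integral {0..m} dawson)"
    using has_bochner_integral_folded_normal_cdf_diff_div[OF assms] by simp
  moreover have "has_bochner_integral lborel (\<lambda>z. ?L m z - ?L 0 z) (normal_ln_sq_mean m / 2 - normal_ln_sq_mean 0 / 2)"
    by (intro has_bochner_integral_diff has_bochner_integral_normal_ln_sq_mean)
  ultimately show ?thesis
    using has_bochner_integral_eq by fastforce
qed

lemma normal_ln_sq_mean_minus: "normal_ln_sq_mean (- m) = normal_ln_sq_mean m"
proof -
  have "normal_ln_sq_mean (- m) = \<bar>-1\<bar> *\<^sub>R (\<integral>y. ln ((0 + -1 * y)\<^sup>2) * normal_density (- m) 1 (0 + -1 * y) \<partial>lborel)"
    unfolding normal_ln_sq_mean_def by (rule lborel_integral_real_affine) simp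
  also have "\<dots> = normal_ln_sq_mean m"
    unfolding normal_ln_sq_mean_def
    by (simp add: normal_density_def power2_commute)
  finally show ?thesis .
qed

lemma ln_one_plus_sq_le_normal_ln_sq_mean_diff:
  "ln (1 + m\<^sup>2) \<le> normal_ln_sq_mean m - normal_ln_sq_mean 0 \<and> (ln (1 + m\<^sup>2) = normal_ln_sq_mean m - normal_ln_sq_mean 0 \<longleftrightarrow> m = 0)"
proof -
  have "ln (1 + \<bar>m\<bar>\<^sup>2) < normal_ln_sq_mean \<bar>m\<bar> - normal_ln_sq_mean 0" if "m \<noteq> 0"
    using ln_one_plus_sq_less_integral_dawson[of "\<bar>m\<bar>"] normal_ln_sq_mean_diff[of "\<bar>m\<bar>"] that by simp
  moreover have "normal_ln_sq_mean \<bar>m\<bar> = normal_ln_sq_mean m"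
    by (cases "0 \<le> m") (simp_all add: normal_ln_sq_mean_minus)
  ultimately show ?thesis
    by (cases "m = 0") auto
qed

lemma C1_eq_normal_ln_sq_mean: "C1 = - normal_ln_sq_mean 0"
  unfolding C1_def normal_ln_sq_mean_def normal_density_def
  by (simp flip: integral_mult_right_zero add: mult_ac)

lemma distributed_normal_integral_sq:
  assumes "0 < \<sigma>" and X: "distributed M lborel X (normal_density \<mu> \<sigma>)"
  shows "(\<integral>\<omega>. (X \<omega>)\<^sup>2 \<partial>M) = \<mu>\<^sup>2 + \<sigma>\<^sup>2"
proof -
  have "(\<integral>\<omega>. (X \<omega>)\<^sup>2 \<partial>M) = (\<integral>x. normal_density \<mu> \<sigma> x * x\<^sup>2 \<partial>lborel)"
    by (rule distributed_integral[OF X, symmetric]) auto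
  also have "\<dots> = (\<integral>x. normal_density \<mu> \<sigma> x * (x - \<mu>) ^ (2 * 1)
                      + (2 * \<mu> * (normal_density \<mu> \<sigma> x * x) - \<mu>\<^sup>2 * normal_density \<mu> \<sigma> x) \<partial>lborel)"
    by (intro Bochner_Integration.integral_cong) (simp_all add: power2_eq_square algebra_simps)
  also have "\<dots> = (\<integral>x. normal_density \<mu> \<sigma> x * (x - \<mu>) ^ (2 * 1) \<partial>lborel)
                    + (2 * \<mu> * (\<integral>x. normal_density \<mu> \<sigma> x * x \<partial>lborel)
                       - \<mu>\<^sup>2 * (\<integral>x. normal_density \<mu> \<sigma> x \<partial>lborel))"
    using assms(1) by (simp add: integrable_normal_moment integrable_normal_moment_nz_1)
  also have "\<dots> = \<sigma>\<^sup>2 + \<mu>\<^sup>2"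
    using assms(1) integral_normal_moment_even[OF assms(1), of \<mu> 1]
    by (simp add: integral_normal_moment_nz_1 power2_eq_square)
  finally show ?thesis by simp
qed

lemma distributed_normal_integral_ln_sq:
  assumes "0 < \<sigma>" and X: "distributed M lborel X (normal_density \<mu> \<sigma>)"
  shows "(\<integral>\<omega>. ln ((X \<omega>)\<^sup>2) \<partial>M) = ln (\<sigma>\<^sup>2) + normal_ln_sq_mean (\<mu> / \<sigma>)"
proof -
  have "(\<integral>\<omega>. ln ((X \<omega>)\<^sup>2) \<partial>M) = (\<integral>x. normal_density \<mu> \<sigma> x * ln (x\<^sup>2) \<partial>lborel)"
    by (rule distributed_integral[OF X, symmetric]) auto
  also have "\<dots> = \<bar>\<sigma>\<bar> *\<^sub>R (\<integral>y. normal_density \<mu> \<sigma> (0 + \<sigma> * y) * ln ((0 + \<sigma> * y)\<^sup>2) \<partial>lborel)"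
    using assms by (intro lborel_integral_real_affine) simp
  also have "\<dots> = (\<integral>y. \<sigma> * (normal_density \<mu> \<sigma> (\<sigma> * y) * ln ((\<sigma> * y)\<^sup>2)) \<partial>lborel)"
    using assms by simp
  also have "\<dots> = (\<integral>y. ln (\<sigma>\<^sup>2) * normal_density (\<mu> / \<sigma>) 1 y + ln (y\<^sup>2) * normal_density (\<mu> / \<sigma>) 1 y \<partial>lborel)"
  proof (intro integral_cong_AE eventually_mono[OF AE_lborel_singleton[of 0]])
    fix y :: real assume "y \<noteq> 0"
    then have ln_eq: "ln ((\<sigma> * y)\<^sup>2) = ln (\<sigma>\<^sup>2) + ln (y\<^sup>2)"
      using assms by (simp add: power_mult_distrib ln_mult)
    have density_eq: "\<sigma> * normal_density \<mu> \<sigma> (\<sigma> * y) = normal_density (\<mu> / \<sigma>) 1 y"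
      using assms by (simp add: normal_density_def real_sqrt_mult field_simps)
    show "\<sigma> * (normal_density \<mu> \<sigma> (\<sigma> * y) * ln ((\<sigma> * y)\<^sup>2))
        = ln (\<sigma>\<^sup>2) * normal_density (\<mu> / \<sigma>) 1 y + ln (y\<^sup>2) * normal_density (\<mu> / \<sigma>) 1 y"
      by (simp only: mult.assoc[symmetric] ln_eq density_eq) (simp add: algebra_simps)
  qed auto
  also have "\<dots> = ln (\<sigma>\<^sup>2) + normal_ln_sq_mean (\<mu> / \<sigma>)"
    unfolding normal_ln_sq_mean_def
    using integrable_ln_sq_mult_normal_density by simp
  finally show ?thesis .
qed

theorem lemma5p1:
  fixes M :: "'a measure" and X :: "'a \<Rightarrow> real" and \<mu> \<sigma> :: real
  assumes "prob_space M"
    and "0 < \<sigma>"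
    and "distributed M lborel X (normal_density \<mu> \<sigma>)"
  shows "ln (\<integral>\<omega>. (X \<omega>)\<^sup>2 \<partial>M) - (\<integral>\<omega>. ln ((X \<omega>)\<^sup>2) \<partial>M) \<le> C1
       \<and> (ln (\<integral>\<omega>. (X \<omega>)\<^sup>2 \<partial>M) - (\<integral>\<omega>. ln ((X \<omega>)\<^sup>2) \<partial>M) = C1
            \<longleftrightarrow> (\<integral>\<omega>. X \<omega> \<partial>M) = 0)"
proof -
  define m where "m = \<mu> / \<sigma>"
  have mean: "(\<integral>\<omega>. X \<omega> \<partial>M) = \<mu>"
    using prob_space.normal_distributed_expectation[OF assms] .
  have "\<mu>\<^sup>2 + \<sigma>\<^sup>2 = \<sigma>\<^sup>2 * (1 + m\<^sup>2)"
    using assms(2) by (simp add: m_def field_simps)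
  then have "ln (\<integral>\<omega>. (X \<omega>)\<^sup>2 \<partial>M) = ln (\<sigma>\<^sup>2) + ln (1 + m\<^sup>2)"
    using assms(2,3) by (simp add: distributed_normal_integral_sq ln_mult add_nonneg_eq_0_iff)
  then have "ln (\<integral>\<omega>. (X \<omega>)\<^sup>2 \<partial>M) - (\<integral>\<omega>. ln ((X \<omega>)\<^sup>2) \<partial>M) = ln (1 + m\<^sup>2) - normal_ln_sq_mean m"
    using assms(2,3) by (simp add: distributed_normal_integral_ln_sq m_def)
  moreover have "m = 0 \<longleftrightarrow> \<mu> = 0"
    using assms(2) by (simp add: m_def)
  ultimately show ?thesis
    using ln_one_plus_sq_le_normal_ln_sq_mean_diff[of m] by (auto simp: mean C1_eq_normal_ln_sq_mean)
qed

end
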